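(* Let $\lambda \in \Omega_o$. Then there exists a feasible solution $(\lambda', \mathbf{s}^{-\prime}, \mathbf{s}^{+\prime}, \delta', \boldsymbol{\alpha}', \gamma')$ of model (MIP) (defined in the context) such that $\mathbf{1}^T\boldsymbol{\alpha}' = n^+(\lambda)$, where $n^+(v)$ denotes the number of positive components of a vector $v$.
   Context: Data envelopment analysis setting. There are $n$ decision making units (DMUs) indexed by $J=\{1,\dots,n\}$, each using $m$ inputs to produce $s$ outputs; DMU$_j$ has input vector $\mathbf{x}_j=(x_{1j},\dots,x_{mj})^T\in\mathbb{R}^m_+$ and output vector $\mathbf{y}_j=(y_{1j},\dots,y_{sj})^T\in\mathbb{R}^s_+$; $\mathbf{X}=[\mathbf{x}_1\cdots\mathbf{x}_n]$, $\mathbf{Y}=[\mathbf{y}_1\cdots\mathbf{y}_n]$. Define $\mathbf{R}^-=(R^-_1,\dots,R^-_m)^T$, $\mathbf{R}^+=(R^+_1,\dots,R^+_s)^T$ by $1/R^-_i=\max_{j}x_{ij}-\min_j x_{ij}$ and $1/R^+_r=\max_j y_{rj}-\min_j y_{rj}$. For $o\in J$, the RAM model is: $\rho_o=\min\, 1-\frac{1}{m+s}(\mathbf{R}^{-T}\mathbf{s}^-+\mathbf{R}^{+T}\mathbf{s}^+)$ subject to $\mathbf{X}\lambda+\mathbf{s}^-=\mathbf{x}_o$, $\mathbf{Y}\lambda-\mathbf{s}^+=\mathbf{y}_o$, $\mathbf{1}^T\lambda=1$, $\lambda\ge 0,\mathbf{s}^-\ge0,\mathbf{s}^+\ge0$.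 A DMU is RAM-efficient if its optimal value $\rho$ equals $1$; let $E\subseteq J$ be the index set of RAM-efficient DMUs and $\mathbf{X}_E,\mathbf{Y}_E$ the submatrices of $\mathbf{X},\mathbf{Y}$ with columns in $E$. Fix the evaluated DMU $o\in J$. System (S): vectors $\lambda\in\mathbb{R}^{|E|}$, $\mathbf{s}^-\in\mathbb{R}^m$, $\mathbf{s}^+\in\mathbb{R}^s$, all nonnegative, with $\mathbf{X}_E\lambda+\mathbf{s}^-=\mathbf{x}_o$, $\mathbf{Y}_E\lambda-\mathbf{s}^+=\mathbf{y}_o$, $\mathbf{1}^T\lambda=1$, $\mathbf{R}^{-T}\mathbf{s}^-+\mathbf{R}^{+T}\mathbf{s}^+=(m+s)(1-\rho_o)$. Let $\Omega_o$ be the set of all $\lambda$ for which there exist $\mathbf{s}^-,\mathbf{s}^+$ such that $(\lambda,\mathbf{s}^-,\mathbf{s}^+)$ satisfies (S). Model (MIP): maximize $\mathbf{1}^T\boldsymbol{\alpha}+\gamma$ over $\lambda\in\mathbb{R}^{|E|}$, $\mathbf{s}^-\in\mathbb{R}^m$, $\mathbf{s}^+\in\mathbb{R}^s$, $\delta\in\mathbb{R}$, $\boldsymbol{\alpha}\in\{0,1\}^{|E|}$, $\gamma\in\{0,1\}$ subject to $\mathbf{X}_E\lambda+\mathbf{s}^--\mathbf{x}_o\delta=\mathbf{0}$, $\mathbf{Y}_E\lambda-\mathbf{s}^+-\mathbf{y}_o\delta=\mathbf{0}$, $\mathbf{1}^T\lambda-\delta=0$, $\mathbf{R}^{-T}\mathbf{s}^-+\mathbf{R}^{+T}\mathbf{s}^+-(m+s)(1-\rho_o)\delta=0$,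 $\boldsymbol{\alpha}\le\lambda$, $\gamma\le\delta$, $\lambda\ge\mathbf{0}$, $\mathbf{s}^-\ge\mathbf{0}$, $\mathbf{s}^+\ge\mathbf{0}$, $\delta\ge0$. *)

theory Defs
  imports Complex_Main
begin

text \<open>DMUs are indexed by j < n, inputs by i < m, outputs by r < s.
  X i j is input i of DMU j, Y r j is output r of DMU j.\<close>

definition Rminus :: "nat \<Rightarrow> (nat \<Rightarrow> nat \<Rightarrow> real) \<Rightarrow> nat \<Rightarrow> real" where
  "Rminus n X i = 1 / ((MAX j\<in>{..<n}. X i j) - (MIN j\<in>{..<n}. X i j))"

definition Rplus :: "nat \<Rightarrow> (nat \<Rightarrow> nat \<Rightarrow> real) \<Rightarrow> nat \<Rightarrow> real" where
  "Rplus n Y r = 1 / ((MAX j\<in>{..<n}. Y r j) - (MIN j\<in>{..<n}. Y r j))"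

definition ram_feasible ::
  "nat \<Rightarrow> nat \<Rightarrow> nat \<Rightarrow> (nat \<Rightarrow> nat \<Rightarrow> real) \<Rightarrow> (nat \<Rightarrow> nat \<Rightarrow> real) \<Rightarrow> nat
   \<Rightarrow> (nat \<Rightarrow> real) \<Rightarrow> (nat \<Rightarrow> real) \<Rightarrow> (nat \<Rightarrow> real) \<Rightarrow> bool" where
  "ram_feasible m s n X Y ob lam sm sp \<longleftrightarrow>
     (\<forall>j<n. lam j \<ge> 0) \<and> (\<forall>i<m. sm i \<ge> 0) \<and> (\<forall>r<s. sp r \<ge> 0) \<and>
     (\<forall>i<m. (\<Sum>j<n. X i j * lam j) + sm i = X i ob) \<and>
     (\<forall>r<s. (\<Sum>j<n. Y r j * lam j) - sp r = Y r ob) \<and>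
     (\<Sum>j<n. lam j) = 1"

definition ram_obj ::
  "nat \<Rightarrow> nat \<Rightarrow> nat \<Rightarrow> (nat \<Rightarrow> nat \<Rightarrow> real) \<Rightarrow> (nat \<Rightarrow> nat \<Rightarrow> real)
   \<Rightarrow> (nat \<Rightarrow> real) \<Rightarrow> (nat \<Rightarrow> real) \<Rightarrow> real" where
  "ram_obj m s n X Y sm sp =
     1 - 1 / real (m + s) * ((\<Sum>i<m. Rminus n X i * sm i) + (\<Sum>r<s. Rplus n Y r * sp r))"

definition ram_rho ::
  "nat \<Rightarrow> nat \<Rightarrow> nat \<Rightarrow> (nat \<Rightarrow> nat \<Rightarrow> real) \<Rightarrow> (nat \<Rightarrow> nat \<Rightarrow> real) \<Rightarrow> nat \<Rightarrow> real" where
  "ram_rho m s n X Y ob =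
     Inf {ram_obj m s n X Y sm sp | lam sm sp. ram_feasible m s n X Y ob lam sm sp}"

definition ram_eff ::
  "nat \<Rightarrow> nat \<Rightarrow> nat \<Rightarrow> (nat \<Rightarrow> nat \<Rightarrow> real) \<Rightarrow> (nat \<Rightarrow> nat \<Rightarrow> real) \<Rightarrow> nat set" where
  "ram_eff m s n X Y = {j. j < n \<and> ram_rho m s n X Y j = 1}"

definition systemS ::
  "nat \<Rightarrow> nat \<Rightarrow> nat \<Rightarrow> (nat \<Rightarrow> nat \<Rightarrow> real) \<Rightarrow> (nat \<Rightarrow> nat \<Rightarrow> real) \<Rightarrow> nat
   \<Rightarrow> (nat \<Rightarrow> real) \<Rightarrow> (nat \<Rightarrow> real) \<Rightarrow> (nat \<Rightarrow> real) \<Rightarrow> bool" where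
  "systemS m s n X Y ob lam sm sp \<longleftrightarrow>
     (let E = ram_eff m s n X Y in
     (\<forall>j\<in>E. lam j \<ge> 0) \<and> (\<forall>i<m. sm i \<ge> 0) \<and> (\<forall>r<s. sp r \<ge> 0) \<and>
     (\<forall>i<m. (\<Sum>j\<in>E. X i j * lam j) + sm i = X i ob) \<and>
     (\<forall>r<s. (\<Sum>j\<in>E. Y r j * lam j) - sp r = Y r ob) \<and>
     (\<Sum>j\<in>E. lam j) = 1 \<and>
     (\<Sum>i<m. Rminus n X i * sm i) + (\<Sum>r<s. Rplus n Y r * sp r)
        = real (m + s) * (1 - ram_rho m s n X Y ob))"

text \<open>Omega_o; vectors in R^|E| are represented by functions vanishing outside E.\<close>
definition Omega ::
  "nat \<Rightarrow> nat \<Rightarrow> nat \<Rightarrow> (nat \<Rightarrow> nat \<Rightarrow> real) \<Rightarrow> (nat \<Rightarrow> nat \<Rightarrow> real) \<Rightarrow> nat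
   \<Rightarrow> (nat \<Rightarrow> real) set" where
  "Omega m s n X Y ob = {lam. (\<forall>j. j \<notin> ram_eff m s n X Y \<longrightarrow> lam j = 0) \<and>
                             (\<exists>sm sp. systemS m s n X Y ob lam sm sp)}"

definition mip_feasible ::
  "nat \<Rightarrow> nat \<Rightarrow> nat \<Rightarrow> (nat \<Rightarrow> nat \<Rightarrow> real) \<Rightarrow> (nat \<Rightarrow> nat \<Rightarrow> real) \<Rightarrow> nat
   \<Rightarrow> (nat \<Rightarrow> real) \<Rightarrow> (nat \<Rightarrow> real) \<Rightarrow> (nat \<Rightarrow> real) \<Rightarrow> real
   \<Rightarrow> (nat \<Rightarrow> real) \<Rightarrow> real \<Rightarrow> bool" where
  "mip_feasible m s n X Y ob lam sm sp \<delta> \<alpha> \<gamma> \<longleftrightarrow>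
     (let E = ram_eff m s n X Y in
     (\<forall>i<m. (\<Sum>j\<in>E. X i j * lam j) + sm i - X i ob * \<delta> = 0) \<and>
     (\<forall>r<s. (\<Sum>j\<in>E. Y r j * lam j) - sp r - Y r ob * \<delta> = 0) \<and>
     (\<Sum>j\<in>E. lam j) - \<delta> = 0 \<and>
     (\<Sum>i<m. Rminus n X i * sm i) + (\<Sum>r<s. Rplus n Y r * sp r)
        - real (m + s) * (1 - ram_rho m s n X Y ob) * \<delta> = 0 \<and>
     (\<forall>j\<in>E. \<alpha> j \<le> lam j) \<and> \<gamma> \<le> \<delta> \<and>
     (\<forall>j\<in>E. lam j \<ge> 0) \<and> (\<forall>i<m. sm i \<ge> 0) \<and> (\<forall>r<s. sp r \<ge> 0) \<and> \<delta> \<ge> 0 \<and>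
     (\<forall>j\<in>E. \<alpha> j \<in> {0, 1}) \<and> \<gamma> \<in> {0, 1})"

end

theory Submission
  imports Defs
begin

text \<open>The constraints of (MIP) are those of (S) homogenised by \<delta>. Scaling a solution of (S) by a
  factor \<delta> \<ge> 1 large enough that every positive weight becomes at least 1 therefore gives a
  feasible point of (MIP) in which \<alpha> can be the indicator of the positive weights and \<gamma> = 1.\<close>

lemma exists_scale_ge_one:
  fixes f :: "'a \<Rightarrow> real"
  assumes "finite A" and "\<forall>a\<in>A. 0 < f a"
  shows "\<exists>t\<ge>1. \<forall>a\<in>A. 1 \<le> t * f a"
proof (intro exI conjI ballI)
  define t where "t = 1 + (\<Sum>a\<in>A. 1 / f a)"
  have recip_sum_nonneg: "0 \<le> (\<Sum>a\<in>A. 1 / f a)"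
    using assms(2) by (intro sum_nonneg) (simp add: less_imp_le)
  then show "1 \<le> t" by (simp add: t_def)
  fix a assume "a \<in> A"
  then have "1 / f a \<le> (\<Sum>a\<in>A. 1 / f a)"
    using assms by (intro member_le_sum) (auto simp: less_imp_le)
  then have "1 / f a \<le> t"
    by (simp add: t_def)
  with \<open>a \<in> A\<close> assms(2) show "1 \<le> t * f a"
    by (simp add: divide_le_eq)
qed

lemma mip_feasible_scale_systemS:
  assumes S: "systemS m s n X Y ob lam sm sp"
    and "0 \<le> \<delta>"
    and "\<forall>j\<in>ram_eff m s n X Y. \<alpha> j \<in> {0, 1}"
    and "\<forall>j\<in>ram_eff m s n X Y. \<alpha> j \<le> \<delta> * lam j"
    and "\<gamma> \<in> {0, 1}" and "\<gamma> \<le> \<delta>"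
  shows "mip_feasible m s n X Y ob (\<lambda>j. \<delta> * lam j) (\<lambda>i. \<delta> * sm i) (\<lambda>r. \<delta> * sp r) \<delta> \<alpha> \<gamma>"
proof -
  define E where "E = ram_eff m s n X Y"
  define c where "c = real (m + s) * (1 - ram_rho m s n X Y ob)"
  have nonneg: "\<forall>j\<in>E. 0 \<le> lam j" "\<forall>i<m. 0 \<le> sm i" "\<forall>r<s. 0 \<le> sp r"
    and inputs: "\<forall>i<m. (\<Sum>j\<in>E. X i j * lam j) + sm i = X i ob"
    and outputs: "\<forall>r<s. (\<Sum>j\<in>E. Y r j * lam j) - sp r = Y r ob"
    and convex: "(\<Sum>j\<in>E. lam j) = 1"
    and slack: "(\<Sum>i<m. Rminus n X i * sm i) + (\<Sum>r<s. Rplus n Y r * sp r) = c"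
    using S unfolding systemS_def E_def c_def Let_def by auto
  have scaled_sum: "(\<Sum>k\<in>K. w k * (\<delta> * v k)) = \<delta> * (\<Sum>k\<in>K. w k * v k)" for K w v
    by (simp add: sum_distrib_left algebra_simps)
  have scaled_slack:
    "(\<Sum>i<m. Rminus n X i * (\<delta> * sm i)) + (\<Sum>r<s. Rplus n Y r * (\<delta> * sp r)) - c * \<delta> = 0"
    unfolding scaled_sum slack[symmetric] by (simp add: algebra_simps)
  have scaled_convex: "(\<Sum>j\<in>E. \<delta> * lam j) - \<delta> = 0"
    using convex by (simp flip: sum_distrib_left)
  have scaled_nonneg: "\<forall>j\<in>E. 0 \<le> \<delta> * lam j" "\<forall>i<m. 0 \<le> \<delta> * sm i" "\<forall>r<s. 0 \<le> \<delta> * sp r"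
    using nonneg \<open>0 \<le> \<delta>\<close> by simp_all
  have "\<forall>i<m. (\<Sum>j\<in>E. X i j * (\<delta> * lam j)) + \<delta> * sm i - X i ob * \<delta> = 0"
  proof (intro allI impI)
    fix i assume "i < m"
    then show "(\<Sum>j\<in>E. X i j * (\<delta> * lam j)) + \<delta> * sm i - X i ob * \<delta> = 0"
      using inputs unfolding scaled_sum by (simp add: algebra_simps flip: distrib_left)
  qed
  moreover have "\<forall>r<s. (\<Sum>j\<in>E. Y r j * (\<delta> * lam j)) - \<delta> * sp r - Y r ob * \<delta> = 0"
  proof (intro allI impI)
    fix r assume "r < s"
    then show "(\<Sum>j\<in>E. Y r j * (\<delta> * lam j)) - \<delta> * sp r - Y r ob * \<delta> = 0"
      using outputs unfolding scaled_sum by (simp add: algebra_simps flip: right_diff_distrib)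
  qed
  ultimately show ?thesis
    using scaled_nonneg scaled_slack scaled_convex assms(2-6)
    unfolding mip_feasible_def Let_def E_def[symmetric] c_def[symmetric] by (simp only: simp_thms)
qed

theorem lemma1:
  fixes m s n :: nat and X Y :: "nat \<Rightarrow> nat \<Rightarrow> real" and ob :: nat
    and lam :: "nat \<Rightarrow> real"
  assumes "\<forall>i<m. \<forall>j<n. X i j \<ge> 0"
    and "\<forall>r<s. \<forall>j<n. Y r j \<ge> 0"
    and "ob < n"
    and "lam \<in> Omega m s n X Y ob"
  shows "\<exists>lam' sm' sp' \<delta>' \<alpha>' \<gamma>'.
           mip_feasible m s n X Y ob lam' sm' sp' \<delta>' \<alpha>' \<gamma>' \<and>
           (\<Sum>j\<in>ram_eff m s n X Y. \<alpha>' j) = real (card {j\<in>ram_eff m s n X Y. lam j > 0})"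
proof -
  define E where "E = ram_eff m s n X Y"
  define P where "P = {j\<in>E. 0 < lam j}"
  define \<alpha> where "\<alpha> j = (if 0 < lam j then 1 else 0 :: real)" for j
  have "finite E" by (simp add: E_def ram_eff_def)
  obtain sm sp where S: "systemS m s n X Y ob lam sm sp"
    using assms(4) unfolding Omega_def by blast
  then have lam_nonneg: "\<forall>j\<in>E. 0 \<le> lam j"
    unfolding systemS_def E_def Let_def by blast
  have "finite P" and "\<forall>j\<in>P. 0 < lam j"
    using \<open>finite E\<close> by (simp_all add: P_def)
  then obtain t where "1 \<le> t" and t: "\<forall>j\<in>P. 1 \<le> t * lam j"
    using exists_scale_ge_one by blast
  have \<alpha>_binary: "\<forall>j\<in>E. \<alpha> j \<in> {0, 1}"
    by (simp add: \<alpha>_def)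
  have \<alpha>_le: "\<forall>j\<in>E. \<alpha> j \<le> t * lam j"
    using t lam_nonneg \<open>1 \<le> t\<close> by (auto simp: \<alpha>_def P_def)
  have "mip_feasible m s n X Y ob (\<lambda>j. t * lam j) (\<lambda>i. t * sm i) (\<lambda>r. t * sp r) t \<alpha> 1"
    using mip_feasible_scale_systemS[OF S _ \<alpha>_binary[unfolded E_def] \<alpha>_le[unfolded E_def]] \<open>1 \<le> t\<close>
    by simp
  moreover have "(\<Sum>j\<in>E. \<alpha> j) = real (card P)"
    using \<open>finite E\<close> by (simp add: \<alpha>_def P_def sum.If_cases Int_def conj_commute)
  ultimately show ?thesis
    unfolding E_def P_def by blast
qed

end
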